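(* Let $0<a<1$, let $\hat c\in\{0,-1,-2,\dots\}$, and let $\mathcal F=(F_1,F_2)$ be a pair of finite sets of positive integers satisfying condition (C): $\{0,1,\dots,-\hat c\}\subset F_1\cup(-\hat c-F_2)$. For every sequence of real numbers $\hat c_s\notin\{0,-1,-2,\dots\}$ with $\lim_{s\to\infty}\hat c_s=\hat c$ we have $\lim_{s\to\infty}\rho^{\mathcal F}_{a,\hat c_s}(x)=\nu^a_{\hat c;\mathcal F}(x)$ for every $x\in\mathbb N$ (the mass at $x$). Moreover, if $\nu^a_{\hat c;\mathcal F}$ is a positive measure, then the numbers $\hat c_s\notin\{0,-1,-2,\dots\}$ with $\hat c_s\to\hat c$ can be chosen so that all the measures $\rho^{\mathcal F}_{a,\hat c_s}$ are positive as well.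
   Context: $\mathbb N=\{0,1,2,\dots\}$. For a finite set $F$ and integer $t$, $t-F=\{t-f:f\in F\}$. For $\hat c\in\{0,-1,-2,\dots\}$ and $\mathcal F$ satisfying (C), $\mathcal H=[(F_1\cup(-\hat c-F_2))\setminus\{0,1,\dots,-\hat c\}]\cup[F_1\cap(-\hat c-F_2)]$ and $\nu^a_{\hat c;\mathcal F}=\sum_{x\in\mathbb N\setminus F_1}\prod_{h\in\mathcal H}(x-h)\,a^x\,\delta_x$. For $d\notin\{0,-1,-2,\dots\}$, $\rho^{\mathcal F}_{a,d}=\sum_{x=0}^\infty\prod_{f\in F_1}(x-f)\prod_{f\in F_2}(x+d+f)\frac{a^x\Gamma(x+d)}{x!}\delta_x$. A discrete measure is positive if all its masses are nonnegative (and not all zero). *)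

theory Defs
  imports "HOL-Analysis.Analysis"
begin

definition condC :: "int \<Rightarrow> int set \<Rightarrow> int set \<Rightarrow> bool" where
  "condC c F1 F2 \<longleftrightarrow> {0..-c} \<subseteq> F1 \<union> ((\<lambda>f. -c - f) ` F2)"

definition Hset :: "int \<Rightarrow> int set \<Rightarrow> int set \<Rightarrow> int set" where
  "Hset c F1 F2 =
     ((F1 \<union> ((\<lambda>f. -c - f) ` F2)) - {0..-c}) \<union> (F1 \<inter> ((\<lambda>f. -c - f) ` F2))"

definition nu :: "real \<Rightarrow> int \<Rightarrow> int set \<Rightarrow> int set \<Rightarrow> nat \<Rightarrow> real" where
  "nu a c F1 F2 x =
     (if int x \<in> F1 then 0
      else (\<Prod>h\<in>Hset c F1 F2. (real x - real_of_int h)) * a ^ x)"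

definition rho :: "int set \<Rightarrow> int set \<Rightarrow> real \<Rightarrow> real \<Rightarrow> nat \<Rightarrow> real" where
  "rho F1 F2 a d x =
     (\<Prod>f\<in>F1. (real x - real_of_int f)) * (\<Prod>f\<in>F2. (real x + d + real_of_int f))
       * a ^ x * Gamma (real x + d) / fact x"

definition positive_discrete :: "(nat \<Rightarrow> real) \<Rightarrow> bool" where
  "positive_discrete \<mu> \<longleftrightarrow> (\<forall>x. \<mu> x \<ge> 0) \<and> (\<exists>x. \<mu> x \<noteq> 0)"

end

theory Submission
  imports Defs
begin

text \<open>Put y = x + d - c. Condition (C) splits the products over F1 and over the reflected set
  -c - F2 into a product over Hset and the block y (y - 1) ... (y + c), and this block times
  Gamma (x + d) is Gamma (y + 1). Hence for d \<notin> \<int> the mass rho(d) at x equals an expression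
  that is continuous in d at c (when x \<notin> F1) and takes the value nu(x) there; at points of F1
  both masses vanish. For positivity, let d decrease to c from above: then every factor of
  rho(d) at x > max(-c, max F1) is positive, while the finitely many remaining masses converge
  to masses of nu, which are positive off F1.\<close>

lemma prod_F1_reflected_F2_eq_Hset:
  fixes c :: int and y :: "'a :: comm_ring_1"
  assumes "finite F1" "finite F2" "\<forall>f\<in>F1. f > 0" "\<forall>f\<in>F2. f > 0" "condC c F1 F2"
  shows "(\<Prod>f\<in>F1. y - of_int f) * (\<Prod>g\<in>(\<lambda>f. -c - f) ` F2. y - of_int g)
       = (\<Prod>h\<in>Hset c F1 F2. y - of_int h) * (\<Prod>j\<in>{0..-c}. y - of_int j)"
proof -
  define G where "G = (\<lambda>f. -c - f) ` F2"
  define J where "J = {0..-c}"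
  let ?p = "\<lambda>S. \<Prod>s\<in>S. y - of_int s"
  have fin: "finite F1" "finite G" "finite J" using assms(1,2) by (simp_all add: G_def J_def)
  have J_sub: "J \<subseteq> F1 \<union> G" using assms(5) by (simp add: condC_def G_def J_def)
  have inter_sub: "F1 \<inter> G \<subseteq> J" using assms(3,4) by (force simp: G_def J_def)
  have "?p F1 * ?p G = ?p (F1 \<union> G) * ?p (F1 \<inter> G)"
    by (rule prod.union_inter[OF fin(1,2), symmetric])
  also have "?p (F1 \<union> G) = ?p ((F1 \<union> G) - J) * ?p J"
    using prod.subset_diff[OF J_sub] fin by simp
  also have "?p ((F1 \<union> G) - J) * ?p J * ?p (F1 \<inter> G)
      = ?p (((F1 \<union> G) - J) \<union> (F1 \<inter> G)) * ?p J"
    using inter_sub fin by (subst prod.union_disjoint) (auto simp: mult_ac)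
  finally show ?thesis by (simp add: Hset_def G_def J_def)
qed

lemma Gamma_mult_prod_descending:
  fixes z :: "'a :: Gamma" and k :: int
  assumes "z \<notin> \<int>\<^sub>\<le>\<^sub>0" "k \<ge> 0"
  shows "Gamma z * (\<Prod>j\<in>{0..k}. z + of_int k - of_int j) = Gamma (z + of_int k + 1)"
proof -
  define n where "n = nat (k + 1)"
  have "(\<Prod>j\<in>{0..k}. z + of_int k - of_int j) = (\<Prod>i\<in>{0..<n}. z + of_nat i)"
    by (rule prod.reindex_bij_witness[of _ "\<lambda>i. k - int i" "\<lambda>j. nat (k - j)"])
       (use assms(2) in \<open>auto simp: n_def\<close>)
  also have "\<dots> = Gamma (z + of_nat n) / Gamma z"
    using pochhammer_Gamma[OF assms(1)] by (simp add: pochhammer_prod)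
  finally show ?thesis
    using assms by (simp add: Gamma_eq_zero_iff n_def add.assoc)
qed

lemma shifted_nonint_ne_int:
  fixes d :: real and n :: int
  assumes "d \<notin> \<int>"
  shows "real x + d - of_int n \<noteq> 0"
proof
  assume "real x + d - of_int n = 0"
  hence "d = of_int (n - int x)" by simp
  with assms show False by auto
qed

lemma real_eq_of_int_iff: "real n = of_int k \<longleftrightarrow> k = int n"
  by (metis of_int_eq_iff of_int_of_nat_eq)

definition rho_regular :: "int \<Rightarrow> int set \<Rightarrow> int set \<Rightarrow> real \<Rightarrow> real \<Rightarrow> nat \<Rightarrow> real" where
  "rho_regular c F1 F2 a d x =
     (\<Prod>f\<in>F1. real x - of_int f) / (\<Prod>f\<in>F1. real x + d - of_int c - of_int f)
       * (\<Prod>h\<in>Hset c F1 F2. real x + d - of_int c - of_int h) * a ^ x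
       * Gamma (real x + d - of_int c + 1) / fact x"

lemma rho_eq_rho_regular:
  fixes c :: int and d :: real
  assumes "finite F1" "finite F2" "\<forall>f\<in>F1. f > 0" "\<forall>f\<in>F2. f > 0" "condC c F1 F2"
    and "c \<le> 0" "d \<notin> \<int>"
  shows "rho F1 F2 a d x = rho_regular c F1 F2 a d x"
proof -
  define y where "y = real x + d - of_int c"
  let ?p = "\<lambda>S. \<Prod>s\<in>S. y - of_int s"
  have "inj_on (\<lambda>f. -c - f) F2" by (auto simp: inj_on_def)
  hence F2_reflected: "(\<Prod>f\<in>F2. real x + d + of_int f) = ?p ((\<lambda>f. -c - f) ` F2)"
    by (simp add: prod.reindex y_def algebra_simps)
  have y_ne: "y - of_int n \<noteq> 0" for n
    using shifted_nonint_ne_int[OF assms(7), of x "c + n"] by (simp add: y_def algebra_simps)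
  have "real x + d \<notin> \<int>\<^sub>\<le>\<^sub>0"
    using shifted_nonint_ne_int[OF assms(7), of x] by (auto elim!: nonpos_Ints_cases)
  hence Gamma_block: "Gamma (real x + d) * ?p {0..-c} = Gamma (y + 1)"
    using Gamma_mult_prod_descending[of "real x + d" "-c"] assms(6) by (simp add: y_def)
  have nz: "?p {0..-c} \<noteq> 0" "?p F1 \<noteq> 0"
    using y_ne assms(1) by simp_all
  have "?p ((\<lambda>f. -c - f) ` F2) = ?p (Hset c F1 F2) * ?p {0..-c} / ?p F1"
    using prod_F1_reflected_F2_eq_Hset[OF assms(1-5), of y] nz by (simp add: field_simps)
  moreover have "Gamma (real x + d) = Gamma (y + 1) / ?p {0..-c}"
    using Gamma_block nz by (simp add: field_simps)
  ultimately show ?thesis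
    unfolding rho_def rho_regular_def F2_reflected y_def[symmetric] using nz
    by (simp add: field_simps)
qed

lemma isCont_rho_regular:
  assumes "finite F1" "int x \<notin> F1"
  shows "isCont (\<lambda>d. rho_regular c F1 F2 a d x) (of_int c)"
  using assms unfolding rho_regular_def
  by (intro continuous_intros) (auto simp: real_eq_of_int_iff)

lemma rho_regular_at_c:
  assumes "finite F1" "int x \<notin> F1"
  shows "rho_regular c F1 F2 a (of_int c) x = nu a c F1 F2 x"
  using assms by (simp add: rho_regular_def nu_def real_eq_of_int_iff Gamma_fact add.commute)

lemma rho_vanishes_on_F1:
  assumes "finite F1" "int x \<in> F1"
  shows "rho F1 F2 a d x = 0"
  using assms by (simp add: rho_def real_eq_of_int_iff)

lemma nonint_if_near_nonpos_int:
  fixes d :: real and c :: int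
  assumes "c \<le> 0" "d \<notin> \<int>\<^sub>\<le>\<^sub>0" "\<bar>d - of_int c\<bar> < 1/2"
  shows "d \<notin> \<int>"
proof
  assume "d \<in> \<int>"
  then obtain m where m: "d = of_int m" by (auto elim: Ints_cases)
  with assms(3) have "\<bar>real_of_int (m - c)\<bar> < 1/2" by simp
  hence "m = c" by linarith
  with m assms(1,2) show False by (auto simp: nonpos_Ints_def)
qed

lemma rho_tendsto_nu:
  fixes c :: int and cs :: "nat \<Rightarrow> real"
  assumes "finite F1" "finite F2" "\<forall>f\<in>F1. f > 0" "\<forall>f\<in>F2. f > 0" "condC c F1 F2"
    and "c \<le> 0" "\<forall>s. cs s \<notin> \<int>\<^sub>\<le>\<^sub>0" "cs \<longlonglongrightarrow> real_of_int c"
  shows "(\<lambda>s. rho F1 F2 a (cs s) x) \<longlonglongrightarrow> nu a c F1 F2 x"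
proof (cases "int x \<in> F1")
  case True
  then show ?thesis
    using rho_vanishes_on_F1[OF assms(1)] by (simp add: nu_def)
next
  case False
  have "(\<lambda>s. rho_regular c F1 F2 a (cs s) x) \<longlonglongrightarrow> nu a c F1 F2 x"
    using isCont_tendsto_compose[OF isCont_rho_regular[OF assms(1) False] assms(8)]
    by (simp add: rho_regular_at_c[OF assms(1) False])
  moreover have "eventually (\<lambda>s. \<bar>cs s - of_int c\<bar> < 1/2) sequentially"
    using assms(8) unfolding tendsto_iff dist_real_def by (metis half_gt_zero_iff zero_less_one)
  hence "eventually (\<lambda>s. rho_regular c F1 F2 a (cs s) x = rho F1 F2 a (cs s) x) sequentially"
    by eventually_elim
       (metis rho_eq_rho_regular[OF assms(1-6)] nonint_if_near_nonpos_int[OF assms(6)] assms(7))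
  ultimately show ?thesis by (rule Lim_transform_eventually)
qed

lemma rho_pos_beyond_F1:
  fixes a d :: real
  assumes "\<forall>f\<in>F1. real_of_int f < real x" "real x + d > 0" "\<forall>f\<in>F2. f > 0" "a > 0"
  shows "rho F1 F2 a d x > 0"
proof -
  have "(\<Prod>f\<in>F1. real x - of_int f) > 0" using assms(1) by (intro prod_pos) auto
  moreover have "(\<Prod>f\<in>F2. real x + d + of_int f) > 0"
    using assms(2,3) by (intro prod_pos) (smt (verit) of_int_0_less_iff)
  moreover have "Gamma (real x + d) > 0" using assms(2) by simp
  ultimately show ?thesis unfolding rho_def using assms(4) by simp
qed

lemma nu_pos_off_F1:
  fixes c :: int
  assumes "\<forall>f\<in>F2. f > 0" "a > 0" "positive_discrete (nu a c F1 F2)" "int x \<notin> F1"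
  shows "nu a c F1 F2 x > 0"
proof -
  have "int x \<notin> Hset c F1 F2"
    using assms(1,4) by (force simp: Hset_def)
  hence "(\<Prod>h\<in>Hset c F1 F2. real x - real_of_int h) \<noteq> 0"
    by (cases "finite (Hset c F1 F2)") (auto simp: real_eq_of_int_iff)
  hence "nu a c F1 F2 x \<noteq> 0" using assms(2,4) by (simp add: nu_def)
  moreover have "nu a c F1 F2 x \<ge> 0" using assms(3) by (simp add: positive_discrete_def)
  ultimately show ?thesis by simp
qed

lemma eventually_positive_rho:
  fixes a :: real and c :: int and cs :: "nat \<Rightarrow> real"
  assumes "0 < a" "c \<le> 0"
    and "finite F1" "finite F2" "\<forall>f\<in>F1. f > 0" "\<forall>f\<in>F2. f > 0" "condC c F1 F2"
    and "positive_discrete (nu a c F1 F2)"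
    and "\<forall>s. cs s \<notin> \<int>\<^sub>\<le>\<^sub>0" "\<forall>s. cs s > of_int c" "cs \<longlonglongrightarrow> real_of_int c"
  shows "eventually (\<lambda>s. positive_discrete (rho F1 F2 a (cs s))) sequentially"
proof -
  define N where "N = nat (Max (insert (-c) F1))"
  have beyond: "rho F1 F2 a (cs s) x > 0" if "x > N" for x s
  proof -
    have "Max (insert (-c) F1) < int x" using that by (simp add: N_def)
    hence x_large: "-c < int x" "\<forall>f\<in>F1. f < int x" using assms(3) by simp_all
    have "real x + cs s > 0"
      using x_large(1) assms(10) by (smt (verit) of_int_less_iff of_int_minus of_int_of_nat_eq)
    with x_large(2) show ?thesis
      by (intro rho_pos_beyond_F1 assms(6,1)) auto
  qed
  have "eventually (\<lambda>s. rho F1 F2 a (cs s) x \<ge> 0) sequentially" for x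
  proof (cases "int x \<in> F1")
    case True
    then show ?thesis using rho_vanishes_on_F1[OF assms(3)] by simp
  next
    case False
    have "(\<lambda>s. rho F1 F2 a (cs s) x) \<longlonglongrightarrow> nu a c F1 F2 x"
      by (rule rho_tendsto_nu[OF assms(3-7,2,9,11)])
    from order_tendstoD(1)[OF this nu_pos_off_F1[OF assms(6,1,8) False]]
    show ?thesis by (rule eventually_mono) simp
  qed
  hence "eventually (\<lambda>s. \<forall>x\<in>{..N}. rho F1 F2 a (cs s) x \<ge> 0) sequentially"
    by (intro eventually_ball_finite) auto
  thus ?thesis
  proof eventually_elim
    case (elim s)
    have "rho F1 F2 a (cs s) x \<ge> 0" for x
      using elim beyond[of x s] by (cases "x \<le> N") auto
    moreover have "rho F1 F2 a (cs s) (Suc N) \<noteq> 0" using beyond[of "Suc N" s] by simp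
    ultimately show ?case unfolding positive_discrete_def by blast
  qed
qed

lemma exists_positive_rho_sequence:
  fixes a :: real and c :: int
  assumes "0 < a" "c \<le> 0"
    and "finite F1" "finite F2" "\<forall>f\<in>F1. f > 0" "\<forall>f\<in>F2. f > 0" "condC c F1 F2"
    and "positive_discrete (nu a c F1 F2)"
  shows "\<exists>cs :: nat \<Rightarrow> real. (\<forall>s. cs s \<notin> \<int>\<^sub>\<le>\<^sub>0) \<and> cs \<longlonglongrightarrow> real_of_int c \<and>
           (\<forall>s. positive_discrete (rho F1 F2 a (cs s)))"
proof -
  define cs0 where "cs0 = (\<lambda>s::nat. real_of_int c + 1 / (real s + 2))"
  have above: "cs0 s > of_int c" for s by (simp add: cs0_def)
  have nonint: "cs0 s \<notin> \<int>\<^sub>\<le>\<^sub>0" for s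
  proof
    assume "cs0 s \<in> \<int>\<^sub>\<le>\<^sub>0"
    then obtain m where "cs0 s = of_int m" by (auto elim: nonpos_Ints_cases)
    hence "1 / (real s + 2) = of_int (m - c)" by (simp add: cs0_def)
    moreover have "0 < 1 / (real s + 2)" "1 / (real s + 2) < 1" by (auto simp: field_simps)
    ultimately have "0 < m - c" "m - c < 1" by simp_all
    thus False by simp
  qed
  have "(\<lambda>s. 1 / real (s + 2)) \<longlonglongrightarrow> 0"
    using LIMSEQ_ignore_initial_segment[OF lim_1_over_n, of 2] by simp
  hence lim: "cs0 \<longlonglongrightarrow> real_of_int c"
    unfolding cs0_def using tendsto_add[OF tendsto_const, of _ 0] by (simp add: add.commute)
  obtain S where S: "\<And>s. s \<ge> S \<Longrightarrow> positive_discrete (rho F1 F2 a (cs0 s))"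
    using eventually_positive_rho[OF assms, of cs0] nonint above lim
    by (auto simp: eventually_sequentially)
  show ?thesis
    using LIMSEQ_ignore_initial_segment[OF lim, of S] nonint S
    by (intro exI[of _ "\<lambda>s. cs0 (s + S)"]) auto
qed

text \<open>The hypothesis a < 1 only ensures that the measures have finite mass; the masses
  themselves are not affected by it.\<close>

theorem mainTheorem2:
  fixes a :: real and c :: int and F1 F2 :: "int set"
  assumes "0 < a" "a < 1" "c \<le> 0"
    and "finite F1" "finite F2" "\<forall>f\<in>F1. f > 0" "\<forall>f\<in>F2. f > 0"
    and "condC c F1 F2"
  shows "(\<forall>cs :: nat \<Rightarrow> real. (\<forall>s. cs s \<notin> \<int>\<^sub>\<le>\<^sub>0) \<and> cs \<longlonglongrightarrow> real_of_int c \<longrightarrow>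
            (\<forall>x::nat. (\<lambda>s. rho F1 F2 a (cs s) x) \<longlonglongrightarrow> nu a c F1 F2 x))
       \<and> (positive_discrete (nu a c F1 F2) \<longrightarrow>
            (\<exists>cs :: nat \<Rightarrow> real. (\<forall>s. cs s \<notin> \<int>\<^sub>\<le>\<^sub>0) \<and> cs \<longlonglongrightarrow> real_of_int c \<and>
               (\<forall>s. positive_discrete (rho F1 F2 a (cs s)))))"
  using rho_tendsto_nu[OF assms(4-8,3)] exists_positive_rho_sequence[OF assms(1,3-8)] by blast

end
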